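(* Let $p$ be a prime and let $\theta\in\mathbb{F}_p((X^{-1}))$ be a counterexample to the $X$-adic Littlewood conjecture over $\mathbb{F}_p$ with finite deficiency $D(\theta)\in\mathbb{N}_0$, i.e. for every $r\ge0$ all partial quotients $A^{(r)}_j$ of the simple continued fraction expansion of $\langle X^r\theta\rangle$ satisfy $\deg(A^{(r)}_j)\le D(\theta)+1$. Then for every $m>D(\theta)$ the three $\mathbb{N}\times m$ matrices $I^{(m)}$, $H^{(m)}(\theta)$ and $J^{(m)}$ generate a digital $(D(\theta),m,3)$-net over $\mathbb{F}_p$.
   Context: $\mathbb{F}_p((X^{-1}))$ is the field of formal Laurent series $\theta=\sum_{i=j}^\infty a_iX^{-i}$ over $\mathbb{F}_p$, with $|\theta|=2^{-j}$ for $a_j\ne0$, fractional part $\langle\theta\rangle=\sum_{i\ge\max\{1,j\}}a_iX^{-i}$, $\|\theta\|=|\langle\theta\rangle|$; $\theta$ is a counterexample to the $X$-adic Littlewood conjecture if $\inf_{r\ge0,Q\in\mathbb{F}_p[X]\setminus\{0\}}|Q|\cdot\|X^rQ\theta\|>0$. Matrices (rows indexed by $1,2,\dots$, columns by $0,\dots,m-1$): $I^{(m)}$ has entry $1$ in row $k$, column $k-1$ and $0$ elsewhere; $H^{(m)}(\theta)$ has entry $a_{k+l}$ in row $k$, column $l$ (with $a_i=0$ for $1\le i<j$); $J^{(m)}$ is the upper antidiagonal matrix with entry $1$ in row $k$, column $m-k$ for $1\le k\le m$ and $0$ elsewhere. Digital point set: for $0\le n<p^m$ with base-$p$ digits $\vec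 n=(n_0,\dots,n_{m-1})^T$, compute $C_i\vec n=(y^{(i)}_1,y^{(i)}_2,\dots)^T$ mod $p$ and set $x^{(i)}_n=\sum_k y^{(i)}_kp^{-k}$. It is a digital $(t,m,3)$-net over $\mathbb{F}_p$ ($0\le t<m$) if for all $d_1,d_2,d_3\in\mathbb{N}_0$ with $d_1+d_2+d_3\le m-t$ the matrix formed by the upper $d_1$ rows of $C_1$, the upper $d_2$ rows of $C_2$ and the upper $d_3$ rows of $C_3$ has full row rank $d_1+d_2+d_3$. *)

theory Defs
  imports "HOL-Computational_Algebra.Computational_Algebra" "HOL-Library.Cardinality"
begin

(* Convention: F_p((X^{-1})) is modelled as 'a fls, where 'a is a finite field of
   prime cardinality p, and the formal variable of fls is Y = X^{-1}.
   Hence the coefficient a_i of X^{-i} of theta is  theta $$ i  (i :: int),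
   and X itself is fls_X_inv. *)

definition polyX :: "'a::field poly \<Rightarrow> 'a fls" where
  "polyX Q = poly (map_poly fls_const Q) fls_X_inv"

definition lnorm :: "'a::field fls \<Rightarrow> real" where
  "lnorm f = (if f = 0 then 0 else 2 powr (- real_of_int (fls_subdegree f)))"

definition pnorm :: "'a::field poly \<Rightarrow> real" where
  "pnorm Q = (if Q = 0 then 0 else 2 ^ degree Q)"

definition frac_part :: "'a::field fls \<Rightarrow> 'a fls" where
  "frac_part f = Abs_fls (\<lambda>i. if i \<ge> 1 then fls_nth f (i) else 0)"

definition int_part :: "'a::field fls \<Rightarrow> 'a poly" where
  "int_part f = Poly (map (\<lambda>k. fls_nth f (- int k)) [0..<nat (- fls_subdegree f) + 1])"

definition dist_int :: "'a::field fls \<Rightarrow> real" where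
  "dist_int f = lnorm (frac_part f)"

definition xadic_LC_counterexample :: "'a::field fls \<Rightarrow> bool" where
  "xadic_LC_counterexample \<theta> \<longleftrightarrow>
     (INF rQ \<in> {(r::nat, Q::'a poly). Q \<noteq> 0}.
        pnorm (snd rQ) * dist_int (fls_X_inv ^ fst rQ * polyX (snd rQ) * \<theta>)) > 0"

(* continued fraction algorithm for phi with |phi| < 1:
   phi = [0; A_1, A_2, ...],  t_0 = phi,  A_{k+1} = [1/t_k],  t_{k+1} = <1/t_k>,
   the expansion stopping when t_k = 0 *)
primrec cf_rem :: "'a::field fls \<Rightarrow> nat \<Rightarrow> 'a fls" where
  "cf_rem \<phi> 0 = \<phi>"
| "cf_rem \<phi> (Suc k) = frac_part (inverse (cf_rem \<phi> k))"

(* the j-th partial quotient A_j (j >= 1); only meaningful when cf_rem phi (j-1) \<noteq> 0 *)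
definition partial_quotient :: "'a::field fls \<Rightarrow> nat \<Rightarrow> 'a poly" where
  "partial_quotient \<phi> j = int_part (inverse (cf_rem \<phi> (j - 1)))"

definition pq_bounded :: "'a::field fls \<Rightarrow> nat \<Rightarrow> bool" where
  "pq_bounded \<theta> D \<longleftrightarrow>
     (\<forall>r::nat. \<forall>j\<ge>1. cf_rem (frac_part (fls_X_inv ^ r * \<theta>)) (j - 1) \<noteq> 0 \<longrightarrow>
        degree (partial_quotient (frac_part (fls_X_inv ^ r * \<theta>)) j) \<le> D + 1)"

definition finite_deficiency :: "'a::field fls \<Rightarrow> bool" where
  "finite_deficiency \<theta> \<longleftrightarrow> (\<exists>D. pq_bounded \<theta> D)"

definition deficiency :: "'a::field fls \<Rightarrow> nat" where
  "deficiency \<theta> = (LEAST D. pq_bounded \<theta> D)"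

(* Matrices with rows indexed by 1,2,... and columns by 0..m-1: M k l *)
definition I_mat :: "nat \<Rightarrow> nat \<Rightarrow> nat \<Rightarrow> 'a::field" where
  "I_mat m k l = (if 1 \<le> k \<and> l < m \<and> l = k - 1 then 1 else 0)"

definition H_mat :: "nat \<Rightarrow> 'a::field fls \<Rightarrow> nat \<Rightarrow> nat \<Rightarrow> 'a" where
  "H_mat m \<theta> k l = (if 1 \<le> k \<and> l < m then fls_nth \<theta> (int (k + l)) else 0)"

definition J_mat :: "nat \<Rightarrow> nat \<Rightarrow> nat \<Rightarrow> 'a::field" where
  "J_mat m k l = (if 1 \<le> k \<and> k \<le> m \<and> l = m - k then 1 else 0)"

definition upper_rows_full_rank ::
  "nat \<Rightarrow> (nat \<Rightarrow> nat \<Rightarrow> 'a::field) \<Rightarrow> (nat \<Rightarrow> nat \<Rightarrow> 'a) \<Rightarrow> (nat \<Rightarrow> nat \<Rightarrow> 'a)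
     \<Rightarrow> nat \<Rightarrow> nat \<Rightarrow> nat \<Rightarrow> bool" where
  "upper_rows_full_rank m C1 C2 C3 d1 d2 d3 \<longleftrightarrow>
     (\<forall>c1 c2 c3 :: nat \<Rightarrow> 'a.
        (\<forall>l<m. (\<Sum>k\<in>{1..d1}. c1 k * C1 k l) + (\<Sum>k\<in>{1..d2}. c2 k * C2 k l)
                + (\<Sum>k\<in>{1..d3}. c3 k * C3 k l) = 0)
        \<longrightarrow> (\<forall>k\<in>{1..d1}. c1 k = 0) \<and> (\<forall>k\<in>{1..d2}. c2 k = 0) \<and> (\<forall>k\<in>{1..d3}. c3 k = 0))"

definition digital_net3 ::
  "nat \<Rightarrow> nat \<Rightarrow> (nat \<Rightarrow> nat \<Rightarrow> 'a::field) \<Rightarrow> (nat \<Rightarrow> nat \<Rightarrow> 'a) \<Rightarrow> (nat \<Rightarrow> nat \<Rightarrow> 'a) \<Rightarrow> bool" where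
  "digital_net3 t m C1 C2 C3 \<longleftrightarrow> t < m \<and>
     (\<forall>d1 d2 d3. d1 + d2 + d3 \<le> m - t \<longrightarrow> upper_rows_full_rank m C1 C2 C3 d1 d2 d3)"

end

theory Submission
  imports Defs
begin

(*
  If all partial quotients of phi = <X^r theta> have degree at most D + 1, then
  |<Q phi>| >= 2^-(deg Q + D + 1) for every nonzero polynomial Q with <Q phi> nonzero.
  This is a descent on deg Q: either |<Q phi>| >= 2^-(deg A_1) already, or Q phi = P + eps
  with deg P = deg Q - deg A_1, and one step of the continued fraction algorithm transfers
  the problem to P and the tail <1/phi> of the expansion. For a Littlewood counterexample
  <X^r Q theta> never vanishes.
  In a vanishing combination of the upper rows of I, H(theta) and J, the columns
  d1 <= l < d1 + d2 + D meet only H, and they say that the coefficients of X^-1, ..., X^-(d2+D)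
  of <X^d1 Q theta> vanish, where Q, of degree < d2, carries the coefficients of the rows of H.
  By the bound Q = 0, and the remaining rows are distinct unit vectors.
*)

unbundle fps_syntax

lemma frac_part_nth: "frac_part f $$ i = (if i \<ge> 1 then f $$ i else 0)"
  unfolding frac_part_def by (subst nth_Abs_fls) (auto simp: MOST_nat)

lemma frac_part_add: "frac_part (f + g) = frac_part f + frac_part g"
  by (rule fls_eqI) (simp add: frac_part_nth)

lemma frac_part_diff: "frac_part (f - g) = frac_part f - frac_part g"
  by (rule fls_eqI) (simp add: frac_part_nth)

lemma frac_part_idem [simp]: "frac_part (frac_part f) = frac_part f"
  by (rule fls_eqI) (simp add: frac_part_nth)

lemma frac_part_eq_0_iff: "frac_part f = 0 \<longleftrightarrow> (\<forall>i\<ge>1. f $$ i = 0)"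
  by (metis frac_part_nth fls_eqI fls_zero_nth)

lemma frac_part_0 [simp]: "frac_part 0 = 0"
  by (simp add: frac_part_eq_0_iff)

lemma frac_part_diff_frac_part [simp]: "frac_part (f - frac_part f) = 0"
  by (simp add: frac_part_diff)

lemma frac_part_mult_eq_0:
  fixes f g :: "'a::field fls"
  assumes "frac_part f = 0" "frac_part g = 0"
  shows "frac_part (f * g) = 0"
  unfolding frac_part_eq_0_iff
proof (intro allI impI)
  fix n :: int
  assume "n \<ge> 1"
  then have "f $$ i * g $$ (n - i) = 0" for i
    using assms by (cases "i \<ge> 1") (auto simp: frac_part_eq_0_iff)
  then show "(f * g) $$ n = 0"
    by (simp add: fls_times_nth(2) sum.neutral)
qed

lemma frac_part_eq_self: "fls_subdegree f \<ge> 1 \<Longrightarrow> frac_part f = f"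
  by (rule fls_eqI) (auto simp: frac_part_nth intro: fls_eq0_below_subdegree)

lemma fls_subdegree_frac_part_ge: "frac_part f \<noteq> 0 \<Longrightarrow> fls_subdegree (frac_part f) \<ge> 1"
  by (rule fls_subdegree_geI) (auto simp: frac_part_nth)

lemma fls_subdegree_le_0_if_frac_part_eq_0:
  "frac_part f = 0 \<Longrightarrow> f \<noteq> 0 \<Longrightarrow> fls_subdegree f \<le> 0"
  by (metis frac_part_eq_0_iff nth_fls_subdegree_nonzero not_le zless_imp_add1_zle add_0)

lemma degree_int_part:
  fixes f :: "'a::field fls"
  assumes "f \<noteq> 0" "fls_subdegree f \<le> 0"
  shows "degree (int_part f) = nat (- fls_subdegree f)"
proof -
  define N where "N = nat (- fls_subdegree f)"
  have coeff: "coeff (int_part f) k = (if k \<le> N then f $$ (- int k) else 0)" for k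
    unfolding int_part_def N_def[symmetric]
    by (auto simp: nth_default_def simp del: upt_Suc)
  have "coeff (int_part f) N \<noteq> 0"
    using assms coeff[of N] by (simp add: N_def)
  then have "N \<le> degree (int_part f)" by (rule le_degree)
  moreover have "degree (int_part f) \<le> N"
    by (rule degree_le) (simp add: coeff)
  ultimately show ?thesis by (simp add: N_def)
qed

definition partial_quotients_bounded :: "'a::field fls \<Rightarrow> nat \<Rightarrow> bool" where
  "partial_quotients_bounded \<phi> D \<longleftrightarrow>
     (\<forall>j\<ge>1. cf_rem \<phi> (j - 1) \<noteq> 0 \<longrightarrow> degree (partial_quotient \<phi> j) \<le> D + 1)"

lemma pq_bounded_iff:
  "pq_bounded \<theta> D \<longleftrightarrow> (\<forall>r. partial_quotients_bounded (frac_part (fls_X_inv ^ r * \<theta>)) D)"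
  by (simp add: pq_bounded_def partial_quotients_bounded_def)

lemma cf_rem_frac_part_inverse: "cf_rem (frac_part (inverse \<phi>)) k = cf_rem \<phi> (Suc k)"
  by (induction k) auto

lemma partial_quotients_bounded_tail:
  assumes "partial_quotients_bounded \<phi> D"
  shows "partial_quotients_bounded (frac_part (inverse \<phi>)) D"
  unfolding partial_quotients_bounded_def
proof (intro allI impI)
  fix j :: nat
  assume j: "j \<ge> 1" "cf_rem (frac_part (inverse \<phi>)) (j - 1) \<noteq> 0"
  have rem: "cf_rem (frac_part (inverse \<phi>)) (j - 1) = cf_rem \<phi> (Suc j - 1)"
    using j(1) by (simp add: cf_rem_frac_part_inverse)
  then have "partial_quotient (frac_part (inverse \<phi>)) j = partial_quotient \<phi> (Suc j)"
    by (simp add: partial_quotient_def)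
  with assms j rem show "degree (partial_quotient (frac_part (inverse \<phi>)) j) \<le> D + 1"
    unfolding partial_quotients_bounded_def by simp
qed

lemma fls_subdegree_le_if_partial_quotients_bounded:
  fixes \<phi> :: "'a::field fls"
  assumes "partial_quotients_bounded \<phi> D" "frac_part \<phi> = \<phi>" "\<phi> \<noteq> 0"
  shows "fls_subdegree \<phi> \<le> int D + 1"
proof -
  have "fls_subdegree \<phi> \<ge> 1"
    using assms(2,3) fls_subdegree_frac_part_ge[of \<phi>] by simp
  moreover have "degree (partial_quotient \<phi> 1) = nat (fls_subdegree \<phi>)"
    unfolding partial_quotient_def using assms(3) calculation
    by (simp add: degree_int_part)
  moreover have "degree (partial_quotient \<phi> 1) \<le> D + 1"
    using assms(1,3) unfolding partial_quotients_bounded_def by auto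
  ultimately show ?thesis by linarith
qed

lemma fls_subdegree_frac_part_mult_le:
  fixes \<phi> Q :: "'a::field fls"
  assumes "frac_part \<phi> = \<phi>" "partial_quotients_bounded \<phi> D"
    and "frac_part Q = 0" "Q \<noteq> 0" "frac_part (Q * \<phi>) \<noteq> 0"
  shows "fls_subdegree (frac_part (Q * \<phi>)) \<le> int D + 1 - fls_subdegree Q"
  using assms
proof (induction "nat (- fls_subdegree Q)" arbitrary: \<phi> Q rule: less_induct)
  case less
  define \<epsilon> where "\<epsilon> = frac_part (Q * \<phi>)"
  define a where "a = fls_subdegree \<phi>"
  have "\<phi> \<noteq> 0"
    using less.prems(5) by auto
  then have a: "1 \<le> a" "a \<le> int D + 1"
    using less.prems(1,2) fls_subdegree_frac_part_ge[of \<phi>]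
      fls_subdegree_le_if_partial_quotients_bounded by (auto simp: a_def)
  have Q_le_0: "fls_subdegree Q \<le> 0"
    using less.prems(3,4) by (rule fls_subdegree_le_0_if_frac_part_eq_0)
  show ?case
  proof (cases "fls_subdegree \<epsilon> \<le> a")
    case True
    then show ?thesis using a Q_le_0 by (simp add: \<epsilon>_def)
  next
    case False
    define P where "P = Q * \<phi> - \<epsilon>"
    define \<psi> where "\<psi> = inverse \<phi>"
    have \<epsilon>_ne_0: "\<epsilon> \<noteq> 0" and \<psi>_ne_0: "\<psi> \<noteq> 0" and Q\<phi>_ne_0: "Q * \<phi> \<noteq> 0"
      using less.prems(4,5) \<open>\<phi> \<noteq> 0\<close> by (simp_all add: \<epsilon>_def \<psi>_def)
    have subdegree_P: "fls_subdegree P = fls_subdegree Q + a"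
      unfolding P_def using False Q_le_0 \<open>\<phi> \<noteq> 0\<close> less.prems(4)
      by (subst fls_subdegree_diff_eq1[OF Q\<phi>_ne_0]) (simp_all add: a_def)
    have "P \<noteq> 0"
      using False Q_le_0 by (auto simp: P_def \<epsilon>_def a_def \<open>\<phi> \<noteq> 0\<close> less.prems(4))
    have P_int: "frac_part P = 0"
      by (simp add: P_def \<epsilon>_def)
    text \<open>One step of Euclid's algorithm: \<open>Q \<phi> = P + \<epsilon>\<close> and \<open>1/\<phi> = A + \<phi>'\<close> give
      \<open>P \<phi>' = Q - P A - \<epsilon>/\<phi>\<close>, where \<open>\<epsilon>/\<phi>\<close> has no polynomial part.\<close>
    have "P * frac_part \<psi> = Q - P * (\<psi> - frac_part \<psi>) - \<epsilon> * \<psi>"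
      using \<open>\<phi> \<noteq> 0\<close> by (simp add: P_def \<psi>_def algebra_simps)
    moreover have "frac_part (\<epsilon> * \<psi>) = \<epsilon> * \<psi>"
      using False \<epsilon>_ne_0 \<open>\<phi> \<noteq> 0\<close> by (intro frac_part_eq_self) (simp add: \<psi>_def a_def)
    ultimately have frac_P\<phi>': "frac_part (P * frac_part \<psi>) = - (\<epsilon> * \<psi>)"
      using less.prems(3) frac_part_mult_eq_0[OF P_int, of "\<psi> - frac_part \<psi>"]
      by (simp add: frac_part_diff)
    have "fls_subdegree (frac_part (P * frac_part \<psi>)) \<le> int D + 1 - fls_subdegree P"
    proof (rule less.hyps)
      show "nat (- fls_subdegree P) < nat (- fls_subdegree Q)"
        using subdegree_P a fls_subdegree_le_0_if_frac_part_eq_0[OF P_int \<open>P \<noteq> 0\<close>] by linarith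
      show "partial_quotients_bounded (frac_part \<psi>) D"
        unfolding \<psi>_def using less.prems(2) by (rule partial_quotients_bounded_tail)
    qed (use frac_P\<phi>' \<epsilon>_ne_0 \<psi>_ne_0 P_int \<open>P \<noteq> 0\<close> in auto)
    then show ?thesis
      using frac_P\<phi>' subdegree_P \<epsilon>_ne_0 \<open>\<phi> \<noteq> 0\<close> by (simp add: \<psi>_def a_def \<epsilon>_def)
  qed
qed

lemma polyX_eq_sum:
  fixes Q :: "'a::field poly"
  assumes "degree Q < N"
  shows "polyX Q = (\<Sum>i<N. fls_const (coeff Q i) * fls_X_inv ^ i)"
proof -
  have "polyX Q = (\<Sum>i\<le>degree Q. fls_const (coeff Q i) * fls_X_inv ^ i)"
    by (simp add: polyX_def poly_altdef coeff_map_poly degree_map_poly)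
  also have "\<dots> = (\<Sum>i<N. fls_const (coeff Q i) * fls_X_inv ^ i)"
    using assms by (intro sum.mono_neutral_left) (auto simp: coeff_eq_0)
  finally show ?thesis .
qed

lemma fls_nth_polyX_mult:
  fixes Q :: "'a::field poly"
  assumes "degree Q < N"
  shows "(polyX Q * f) $$ n = (\<Sum>i<N. coeff Q i * f $$ (n + int i))"
proof -
  have "polyX Q * f = (\<Sum>i<N. fls_const (coeff Q i) * (fls_X_inv ^ i * f))"
    by (simp add: polyX_eq_sum[OF assms] sum_distrib_right mult.assoc)
  then show ?thesis
    by (simp add: fls_nth_sum fls_X_inv_power_times_conv_shift)
qed

lemma fls_nth_polyX: "polyX Q $$ n = (if n \<le> 0 then coeff Q (nat (- n)) else 0)"
proof -
  define N where "N = Suc (max (degree Q) (nat (- n)))"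
  have "polyX Q $$ n = (\<Sum>i<N. coeff Q i * (if n + int i = 0 then 1 else 0))"
    using fls_nth_polyX_mult[of Q N 1 n] by (simp add: N_def)
  also have "\<dots> = (\<Sum>i<N. if n \<le> 0 \<and> i = nat (- n) then coeff Q i else 0)"
    by (intro sum.cong) auto
  finally show ?thesis
    by (simp add: N_def sum.If_cases)
qed

lemma frac_part_polyX [simp]: "frac_part (polyX Q) = 0"
  by (simp add: frac_part_eq_0_iff fls_nth_polyX)

lemma fls_subdegree_polyX:
  fixes Q :: "'a::field poly"
  assumes "Q \<noteq> 0"
  shows "polyX Q \<noteq> 0" "fls_subdegree (polyX Q) = - int (degree Q)"
proof -
  have "polyX Q $$ (- int (degree Q)) \<noteq> 0"
    using assms by (simp add: fls_nth_polyX)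
  moreover have "polyX Q $$ n = 0" if "n < - int (degree Q)" for n
    using that by (simp add: fls_nth_polyX coeff_eq_0)
  ultimately show "polyX Q \<noteq> 0" "fls_subdegree (polyX Q) = - int (degree Q)"
    by (auto intro: fls_subdegree_eqI)
qed

lemma frac_part_ne_0_if_xadic_LC_counterexample:
  assumes "xadic_LC_counterexample \<theta>" "Q \<noteq> 0"
  shows "frac_part (fls_X_inv ^ r * polyX Q * \<theta>) \<noteq> 0"
proof
  assume frac_0: "frac_part (fls_X_inv ^ r * polyX Q * \<theta>) = 0"
  let ?S = "{(r::nat, Q::'a poly). Q \<noteq> 0}"
  let ?f = "\<lambda>rQ. pnorm (snd rQ) * dist_int (fls_X_inv ^ fst rQ * polyX (snd rQ) * \<theta>)"
  have "bdd_below (?f ` ?S)"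
    by (rule bdd_belowI[of _ 0]) (auto simp: pnorm_def dist_int_def lnorm_def)
  then have "(INF rQ \<in> ?S. ?f rQ) \<le> ?f (r, Q)"
    by (rule cINF_lower) (use assms(2) in auto)
  also have "?f (r, Q) = 0"
    using frac_0 by (simp add: dist_int_def lnorm_def)
  finally show False
    using assms(1) unfolding xadic_LC_counterexample_def by simp
qed

lemma fls_subdegree_frac_part_polyX_mult_le:
  fixes \<theta> :: "'a::field fls"
  assumes "pq_bounded \<theta> D" "Q \<noteq> 0" "frac_part (fls_X_inv ^ r * polyX Q * \<theta>) \<noteq> 0"
  shows "fls_subdegree (frac_part (fls_X_inv ^ r * polyX Q * \<theta>)) \<le> int (degree Q + D) + 1"
proof -
  define \<phi> where "\<phi> = frac_part (fls_X_inv ^ r * \<theta>)"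
  have "fls_X_inv ^ r * polyX Q * \<theta> = polyX Q * (fls_X_inv ^ r * \<theta> - \<phi>) + polyX Q * \<phi>"
    by (simp add: algebra_simps)
  then have frac_eq: "frac_part (fls_X_inv ^ r * polyX Q * \<theta>) = frac_part (polyX Q * \<phi>)"
    using frac_part_mult_eq_0[OF frac_part_polyX, of "fls_X_inv ^ r * \<theta> - \<phi>" Q]
    by (simp add: frac_part_add \<phi>_def)
  have "fls_subdegree (frac_part (polyX Q * \<phi>)) \<le> int D + 1 - fls_subdegree (polyX Q)"
    using assms frac_eq fls_subdegree_polyX(1)
    by (intro fls_subdegree_frac_part_mult_le) (auto simp: \<phi>_def pq_bounded_iff)
  then show ?thesis
    using frac_eq fls_subdegree_polyX(2)[OF assms(2)] by simp
qed

lemma hankel_combination_eq_0: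
  fixes \<theta> :: "'a::field fls" and c :: "nat \<Rightarrow> 'a"
  assumes "xadic_LC_counterexample \<theta>" "pq_bounded \<theta> D"
    and vanish: "\<And>l. r \<le> l \<Longrightarrow> l < r + d + D \<Longrightarrow> (\<Sum>k\<in>{1..d}. c k * \<theta> $$ int (k + l)) = 0"
    and "k \<in> {1..d}"
  shows "c k = 0"
proof -
  define Q :: "'a poly" where "Q = Poly (map (\<lambda>i. c (Suc i)) [0..<d])"
  have coeff_Q: "coeff Q i = (if i < d then c (Suc i) else 0)" for i
    by (simp add: Q_def nth_default_def)
  have "Q = 0"
  proof (rule ccontr)
    assume "Q \<noteq> 0"
    then have "degree Q < d"
      using coeff_Q[of "degree Q"] by (metis leading_coeff_0_iff)
    define R where "R = fls_X_inv ^ r * polyX Q * \<theta>"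
    have R_eq: "R = polyX Q * (fls_X_inv ^ r * \<theta>)"
      by (simp add: R_def mult_ac)
    have R_nth: "R $$ n = 0" if "1 \<le> n" "n \<le> int (d + D)" for n
    proof -
      have "R $$ n = (\<Sum>i<d. c (Suc i) * \<theta> $$ int (Suc i + (nat n - 1 + r)))"
        using fls_nth_polyX_mult[OF \<open>degree Q < d\<close>, of "fls_X_inv ^ r * \<theta>" n] that
        by (simp add: R_eq coeff_Q fls_X_inv_power_times_conv_shift algebra_simps)
      also have "\<dots> = 0"
        using vanish[of "nat n - 1 + r"] that by (simp add: sum.atLeast1_atMost_eq)
      finally show ?thesis .
    qed
    have "frac_part R \<noteq> 0"
      unfolding R_def using assms(1) \<open>Q \<noteq> 0\<close> by (rule frac_part_ne_0_if_xadic_LC_counterexample)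
    then have "int (d + D) + 1 \<le> fls_subdegree (frac_part R)"
      by (intro fls_subdegree_geI) (auto simp: frac_part_nth R_nth)
    moreover have "fls_subdegree (frac_part R) \<le> int (degree Q + D) + 1"
      unfolding R_def using assms(2) \<open>Q \<noteq> 0\<close> \<open>frac_part R \<noteq> 0\<close>[unfolded R_def]
      by (rule fls_subdegree_frac_part_polyX_mult_le)
    ultimately show False
      using \<open>degree Q < d\<close> by linarith
  qed
  then show ?thesis
    using coeff_Q[of "k - 1"] assms(4) by (simp split: if_splits)
qed

lemma I_mat_column_sum:
  "(\<Sum>k\<in>{1..d}. c k * I_mat m k l) = (if l < d \<and> l < m then c (Suc l) else 0)"
proof (cases "l < m")
  case True
  then have "c k * I_mat m k l = (if k = Suc l then c k else 0)" for k
    by (auto simp: I_mat_def)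
  with True show ?thesis
    by simp
qed (simp add: I_mat_def)

lemma J_mat_column_sum:
  "(\<Sum>k\<in>{1..d}. c k * J_mat m k l) = (if l < m \<and> m - d \<le> l then c (m - l) else 0)"
proof (cases "l < m")
  case True
  then have "c k * J_mat m k l = (if k = m - l then c k else 0)" for k
    by (auto simp: J_mat_def)
  with True show ?thesis
    by auto
qed (auto simp: J_mat_def intro!: sum.neutral)

lemma H_mat_column_sum:
  "(\<Sum>k\<in>{1..d}. c k * H_mat m \<theta> k l) = (if l < m then \<Sum>k\<in>{1..d}. c k * \<theta> $$ int (k + l) else 0)"
  by (auto simp: H_mat_def intro: sum.cong)

lemma upper_rows_full_rank_I_H_J:
  fixes \<theta> :: "'a::field fls"
  assumes "xadic_LC_counterexample \<theta>" "pq_bounded \<theta> D" and size: "d1 + d2 + d3 + D \<le> m"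
  shows "upper_rows_full_rank m (I_mat m) (H_mat m \<theta>) (J_mat m) d1 d2 d3"
  unfolding upper_rows_full_rank_def
proof (intro allI impI)
  fix c1 c2 c3 :: "nat \<Rightarrow> 'a"
  assume combination_eq_0: "\<forall>l<m. (\<Sum>k\<in>{1..d1}. c1 k * I_mat m k l) + (\<Sum>k\<in>{1..d2}. c2 k * H_mat m \<theta> k l)
                + (\<Sum>k\<in>{1..d3}. c3 k * J_mat m k l) = 0"
  have column: "(if l < d1 then c1 (Suc l) else 0) + (\<Sum>k\<in>{1..d2}. c2 k * \<theta> $$ int (k + l))
      + (if m - d3 \<le> l then c3 (m - l) else 0) = 0" if "l < m" for l
    using combination_eq_0[rule_format, OF that] that
    unfolding I_mat_column_sum H_mat_column_sum J_mat_column_sum by simp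
  have c2: "c2 k = 0" if "k \<in> {1..d2}" for k
    using assms(1,2) _ that
  proof (rule hankel_combination_eq_0)
    show "(\<Sum>k\<in>{1..d2}. c2 k * \<theta> $$ int (k + l)) = 0" if "d1 \<le> l" "l < d1 + d2 + D" for l
    proof -
      have "l < m - d3"
        using that size by linarith
      with column[of l] that show ?thesis
        by simp
    qed
  qed
  have "c1 k = 0" if "k \<in> {1..d1}" for k
  proof -
    have "k - 1 < d1" "k - 1 < m - d3"
      using that size by auto
    with column[of "k - 1"] c2 that show ?thesis
      by simp
  qed
  moreover have "c3 k = 0" if "k \<in> {1..d3}" for k
  proof -
    have "m - k < m" "d1 \<le> m - k" "m - d3 \<le> m - k" "m - (m - k) = k"
      using that size by auto
    with column[of "m - k"] c2 that show ?thesis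
      by simp
  qed
  ultimately show "(\<forall>k\<in>{1..d1}. c1 k = 0) \<and> (\<forall>k\<in>{1..d2}. c2 k = 0) \<and> (\<forall>k\<in>{1..d3}. c3 k = 0)"
    using c2 by blast
qed

theorem lemma4:
  fixes \<theta> :: "'a::{field,finite} fls" and p m :: nat
  assumes "prime p" and "CARD('a) = p"
    and "xadic_LC_counterexample \<theta>"
    and "finite_deficiency \<theta>"
    and "m > deficiency \<theta>"
  shows "digital_net3 (deficiency \<theta>) m (I_mat m) (H_mat m \<theta>) (J_mat m)"
proof -
  have "pq_bounded \<theta> (deficiency \<theta>)"
    using assms(4) unfolding deficiency_def finite_deficiency_def by (rule LeastI_ex)
  with assms(3,5) show ?thesis
    unfolding digital_net3_def by (auto intro: upper_rows_full_rank_I_H_J)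
qed

end
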